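(* Let $R$ be a commutative Artinian ring and let $M$ be a non-zero $R$-module which is PS-hollow representable. Suppose that for every PS-hollow submodule $N$ of $M$, the submodule $In(N)$ is a PS-hollow submodule of $M$. Then $M$ has a minimal PS-hollow representation.
   Context: All rings are commutative with unity. An $R$-submodule $N\leq M$ is PS-hollow (pseudo strongly hollow) iff for every ideal $I\leq R$ and every submodule $L\leq M$: $N\subseteq IM+L$ implies $N\subseteq IM$ or $N\subseteq L$. For a PS-hollow $N\leq M$ put $A_N=\{I\leq R \text{ ideal}: N\subseteq IM\}$, $H_N$ the set of minimal elements of $A_N$ (w.r.t. inclusion), and $In(N)=\bigcap_{I\in H_N} IM$ (with $In(N)=M$ if $H_N=\emptyset$). For a set $H$ of ideals, $N$ is $H$-PS-hollow iff $N$ is PS-hollow and $H_N=H$. $M$ is PS-hollow representable iff $M$ is a finite sum of PS-hollow submodules. A minimal PS-hollow representation of $M$ is an expression $M=\sum_{i=1}^n N_i$ where each $N_i$ is $H_i$-PS-hollow (for some $H_i$), such that (1) $In(N_1),\dots,In(N_n)$ are pairwise incomparable (w.r.t. inclusion) and (2) $N_j\not\subseteq\sum_{i\neq j}N_i$ for every $j$. *)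

theory Defs
  imports "HOL-Algebra.Module" "HOL-Algebra.Ideal"
begin

definition artinian_cring :: "('a, 'c) ring_scheme \<Rightarrow> bool" where
  "artinian_cring R \<longleftrightarrow> cring R \<and>
     (\<forall>f :: nat \<Rightarrow> 'a set. (\<forall>n. ideal (f n) R \<and> f (Suc n) \<subseteq> f n)
          \<longrightarrow> (\<exists>k. \<forall>n\<ge>k. f n = f k))"

definition gen_submodule :: "('a, 'c) ring_scheme \<Rightarrow> ('a, 'b, 'd) module_scheme \<Rightarrow> 'b set \<Rightarrow> 'b set" where
  "gen_submodule R M S = \<Inter>{L. submodule L R M \<and> S \<subseteq> L}"

definition ideal_smult :: "('a, 'c) ring_scheme \<Rightarrow> ('a, 'b, 'd) module_scheme \<Rightarrow> 'a set \<Rightarrow> 'b set" where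
  "ideal_smult R M I = gen_submodule R M {a \<odot>\<^bsub>M\<^esub> m | a m. a \<in> I \<and> m \<in> carrier M}"

definition PS_hollow :: "('a, 'c) ring_scheme \<Rightarrow> ('a, 'b, 'd) module_scheme \<Rightarrow> 'b set \<Rightarrow> bool" where
  "PS_hollow R M N \<longleftrightarrow> submodule N R M \<and>
     (\<forall>I L. ideal I R \<longrightarrow> submodule L R M \<longrightarrow>
        N \<subseteq> gen_submodule R M (ideal_smult R M I \<union> L) \<longrightarrow>
        N \<subseteq> ideal_smult R M I \<or> N \<subseteq> L)"

definition A_set :: "('a, 'c) ring_scheme \<Rightarrow> ('a, 'b, 'd) module_scheme \<Rightarrow> 'b set \<Rightarrow> 'a set set" where
  "A_set R M N = {I. ideal I R \<and> N \<subseteq> ideal_smult R M I}"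

definition H_set :: "('a, 'c) ring_scheme \<Rightarrow> ('a, 'b, 'd) module_scheme \<Rightarrow> 'b set \<Rightarrow> 'a set set" where
  "H_set R M N = {I \<in> A_set R M N. \<forall>J \<in> A_set R M N. J \<subseteq> I \<longrightarrow> J = I}"

definition In_sub :: "('a, 'c) ring_scheme \<Rightarrow> ('a, 'b, 'd) module_scheme \<Rightarrow> 'b set \<Rightarrow> 'b set" where
  "In_sub R M N = carrier M \<inter> (\<Inter>I \<in> H_set R M N. ideal_smult R M I)"

definition H_PS_hollow :: "('a, 'c) ring_scheme \<Rightarrow> ('a, 'b, 'd) module_scheme \<Rightarrow> 'a set set \<Rightarrow> 'b set \<Rightarrow> bool" where
  "H_PS_hollow R M H N \<longleftrightarrow> PS_hollow R M N \<and> H_set R M N = H"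

definition PS_hollow_representable :: "('a, 'c) ring_scheme \<Rightarrow> ('a, 'b, 'd) module_scheme \<Rightarrow> bool" where
  "PS_hollow_representable R M \<longleftrightarrow>
     (\<exists>(n::nat) (N :: nat \<Rightarrow> 'b set). (\<forall>i<n. PS_hollow R M (N i)) \<and>
        carrier M = gen_submodule R M (\<Union>i<n. N i))"

definition minimal_PS_hollow_rep ::
  "('a, 'c) ring_scheme \<Rightarrow> ('a, 'b, 'd) module_scheme \<Rightarrow> nat \<Rightarrow> (nat \<Rightarrow> 'b set) \<Rightarrow> bool" where
  "minimal_PS_hollow_rep R M n N \<longleftrightarrow>
     carrier M = gen_submodule R M (\<Union>i<n. N i) \<and>
     (\<forall>i<n. \<exists>H. H_PS_hollow R M H (N i)) \<and>
     (\<forall>i<n. \<forall>j<n. i \<noteq> j \<longrightarrow> \<not> In_sub R M (N i) \<subseteq> In_sub R M (N j)) \<and>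
     (\<forall>j<n. \<not> N j \<subseteq> gen_submodule R M (\<Union>i\<in>{..<n} - {j}. N i))"

end

theory Submission
  imports Defs
begin

text \<open>Replace every summand N of a PS-hollow representation by In(N). By hypothesis In(N)
is again PS-hollow, it still contains N, and it is fixed by In, because H(N) \<subseteq> H(In(N)).
Discarding redundant summands one at a time keeps all summands In-fixed and makes the
representation irredundant, and for In-fixed summands irredundancy forces the In's to be
incomparable: In(Q i) \<subseteq> In(Q j) would give Q i \<subseteq> In(Q i) \<subseteq> In(Q j) = Q j, so Q i would
be redundant.\<close>

lemma submodule_subset_carrier: "submodule N R M \<Longrightarrow> N \<subseteq> carrier M"
  using submodule.axioms(1) subgroup.subset by fastforce

lemma PS_hollow_subset_carrier: "PS_hollow R M N \<Longrightarrow> N \<subseteq> carrier M"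
  unfolding PS_hollow_def by (blast dest: submodule_subset_carrier)

lemma gen_submodule_mono: "A \<subseteq> B \<Longrightarrow> gen_submodule R M A \<subseteq> gen_submodule R M B"
  unfolding gen_submodule_def by blast

lemma subset_gen_submodule: "A \<subseteq> gen_submodule R M A"
  unfolding gen_submodule_def by blast

lemma gen_submodule_subset_carrier:
  "module R M \<Longrightarrow> S \<subseteq> carrier M \<Longrightarrow> gen_submodule R M S \<subseteq> carrier M"
  unfolding gen_submodule_def using module.carrier_is_submodule[of R M] by blast

lemma gen_submodule_Un_absorb:
  "B \<subseteq> gen_submodule R M A \<Longrightarrow> gen_submodule R M (A \<union> B) = gen_submodule R M A"
  unfolding gen_submodule_def by blast

lemma subset_In_sub: "N \<subseteq> carrier M \<Longrightarrow> N \<subseteq> In_sub R M N"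
  unfolding In_sub_def H_set_def A_set_def by blast

lemma H_set_subset_H_set_In_sub:
  assumes "N \<subseteq> carrier M"
  shows "H_set R M N \<subseteq> H_set R M (In_sub R M N)"
proof
  fix I assume I: "I \<in> H_set R M N"
  have "I \<in> A_set R M (In_sub R M N)"
    using I unfolding H_set_def A_set_def In_sub_def by blast
  moreover have "\<forall>J \<in> A_set R M (In_sub R M N). J \<subseteq> I \<longrightarrow> J = I"
    using I subset_In_sub[OF assms] unfolding H_set_def A_set_def by blast
  ultimately show "I \<in> H_set R M (In_sub R M N)" unfolding H_set_def by blast
qed

lemma In_sub_idem:
  assumes "N \<subseteq> carrier M"
  shows "In_sub R M (In_sub R M N) = In_sub R M N"
proof
  show "In_sub R M (In_sub R M N) \<subseteq> In_sub R M N"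
    using H_set_subset_H_set_In_sub[OF assms] unfolding In_sub_def by blast
  show "In_sub R M N \<subseteq> In_sub R M (In_sub R M N)"
    by (rule subset_In_sub) (simp add: In_sub_def)
qed

definition In_fixed_PS_hollow :: "('a, 'c) ring_scheme \<Rightarrow> ('a, 'b, 'd) module_scheme \<Rightarrow> 'b set \<Rightarrow> bool" where
  "In_fixed_PS_hollow R M N \<longleftrightarrow> PS_hollow R M N \<and> In_sub R M N = N"

lemma In_fixed_PS_hollow_representation:
  assumes "module R M" and "PS_hollow_representable R M"
    and In_PS_hollow: "\<And>N. PS_hollow R M N \<Longrightarrow> PS_hollow R M (In_sub R M N)"
  obtains n :: nat and Q where "\<forall>i<n. In_fixed_PS_hollow R M (Q i)"
    and "carrier M = gen_submodule R M (\<Union>i<n. Q i)"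
proof -
  obtain n :: nat and N where N: "\<forall>i<n. PS_hollow R M (N i)"
    "carrier M = gen_submodule R M (\<Union>i<n. N i)"
    using assms(2) unfolding PS_hollow_representable_def by blast
  define Q where "Q i = In_sub R M (N i)" for i
  have fixed: "In_fixed_PS_hollow R M (Q i)" if "i < n" for i
  proof -
    have "PS_hollow R M (N i)"
      using N(1) that by blast
    then show ?thesis
      by (simp add: In_fixed_PS_hollow_def Q_def In_PS_hollow In_sub_idem PS_hollow_subset_carrier)
  qed
  have "carrier M \<subseteq> gen_submodule R M (\<Union>i<n. Q i)"
    unfolding N(2) Q_def
    using N(1) by (intro gen_submodule_mono UN_mono subset_In_sub PS_hollow_subset_carrier) auto
  moreover have "gen_submodule R M (\<Union>i<n. Q i) \<subseteq> carrier M"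
    by (rule gen_submodule_subset_carrier[OF assms(1)]) (auto simp: Q_def In_sub_def)
  ultimately show ?thesis using that fixed by blast
qed

lemma UN_lessThan_skip:
  assumes "j < n"
  shows "(\<Union>k<n - 1. Q (if k < j then k else Suc k)) = (\<Union>i\<in>{..<n} - {j}. Q i)"
proof -
  have "(\<lambda>k. if k < j then k else Suc k) ` {..<n - 1} = {..<n} - {j}"
  proof
    show "{..<n} - {j} \<subseteq> (\<lambda>k. if k < j then k else Suc k) ` {..<n - 1}"
    proof
      fix i assume i: "i \<in> {..<n} - {j}"
      show "i \<in> (\<lambda>k. if k < j then k else Suc k) ` {..<n - 1}"
      proof (cases "i < j")
        case True then show ?thesis using i assms by (intro image_eqI[of _ _ i]) auto
      next
        case False then show ?thesis using i by (intro image_eqI[of _ _ "i - 1"]) auto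
      qed
    qed
  qed (use assms in auto)
  then show ?thesis
    by (metis image_image)
qed

lemma drop_redundant_generator:
  assumes "j < n"
    and gen: "carrier M = gen_submodule R M (\<Union>i<n. Q i)"
    and redundant: "Q j \<subseteq> gen_submodule R M (\<Union>i\<in>{..<n} - {j}. Q i)"
  shows "carrier M = gen_submodule R M (\<Union>k<n - 1. Q (if k < j then k else Suc k))"
proof -
  have "(\<Union>i<n. Q i) = (\<Union>i\<in>{..<n} - {j}. Q i) \<union> Q j"
    using \<open>j < n\<close> by auto
  with gen have "carrier M = gen_submodule R M ((\<Union>i\<in>{..<n} - {j}. Q i) \<union> Q j)"
    by simp
  also have "\<dots> = gen_submodule R M (\<Union>i\<in>{..<n} - {j}. Q i)"
    by (rule gen_submodule_Un_absorb[OF redundant])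
  also have "\<dots> = gen_submodule R M (\<Union>k<n - 1. Q (if k < j then k else Suc k))"
    by (simp only: UN_lessThan_skip[OF \<open>j < n\<close>])
  finally show ?thesis .
qed

lemma irredundant_generating_family:
  fixes n :: nat
  assumes "carrier M = gen_submodule R M (\<Union>i<n. Q i)" and "\<forall>i<n. P (Q i)"
  shows "\<exists>(m :: nat) Q'. carrier M = gen_submodule R M (\<Union>i<m. Q' i) \<and> (\<forall>i<m. P (Q' i)) \<and>
    (\<forall>j<m. \<not> Q' j \<subseteq> gen_submodule R M (\<Union>i\<in>{..<m} - {j}. Q' i))"
  using assms
proof (induction n arbitrary: Q rule: less_induct)
  case (less n)
  show ?case
  proof (cases "\<exists>j<n. Q j \<subseteq> gen_submodule R M (\<Union>i\<in>{..<n} - {j}. Q i)")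
    case True
    then obtain j where j: "j < n"
      and redundant: "Q j \<subseteq> gen_submodule R M (\<Union>i\<in>{..<n} - {j}. Q i)"
      by blast
    define Q' where "Q' k = Q (if k < j then k else Suc k)" for k
    have "n - 1 < n"
      using j by simp
    moreover have "carrier M = gen_submodule R M (\<Union>k<n - 1. Q' k)"
      unfolding Q'_def using j less.prems(1) redundant by (rule drop_redundant_generator)
    moreover have "\<forall>k<n - 1. P (Q' k)"
      using less.prems(2) unfolding Q'_def by auto
    ultimately show ?thesis
      by (rule less.IH)
  next
    case False
    with less.prems show ?thesis
      by (intro exI[of _ n] exI[of _ Q]) blast
  qed
qed

lemma In_sub_incomparable_if_irredundant:
  assumes "i < n" "j < n" "i \<noteq> j" "Q i \<subseteq> carrier M" "In_sub R M (Q j) = Q j"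
    and irredundant: "\<not> Q i \<subseteq> gen_submodule R M (\<Union>k\<in>{..<n} - {i}. Q k)"
  shows "\<not> In_sub R M (Q i) \<subseteq> In_sub R M (Q j)"
proof
  assume "In_sub R M (Q i) \<subseteq> In_sub R M (Q j)"
  then have "Q i \<subseteq> Q j"
    using subset_In_sub[OF \<open>Q i \<subseteq> carrier M\<close>] \<open>In_sub R M (Q j) = Q j\<close> by blast
  also have "\<dots> \<subseteq> (\<Union>k\<in>{..<n} - {i}. Q k)"
    using \<open>j < n\<close> \<open>i \<noteq> j\<close> by blast
  also have "\<dots> \<subseteq> gen_submodule R M (\<Union>k\<in>{..<n} - {i}. Q k)"
    by (rule subset_gen_submodule)
  finally show False
    using irredundant by contradiction
qed

theorem mainTheorem1:
  fixes R :: "'a ring" and M :: "('a, 'b) module"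
  assumes "artinian_cring R"
    and "module R M"
    and "carrier M \<noteq> {\<zero>\<^bsub>M\<^esub>}"
    and "PS_hollow_representable R M"
    and "\<And>N. PS_hollow R M N \<Longrightarrow> PS_hollow R M (In_sub R M N)"
  shows "\<exists>n N. minimal_PS_hollow_rep R M n N"
proof -
  obtain n :: nat and Q where "\<forall>i<n. In_fixed_PS_hollow R M (Q i)"
    and "carrier M = gen_submodule R M (\<Union>i<n. Q i)"
    by (rule In_fixed_PS_hollow_representation[OF assms(2,4,5)])
  then obtain m :: nat and N where gen: "carrier M = gen_submodule R M (\<Union>i<m. N i)"
    and fixed: "\<forall>i<m. In_fixed_PS_hollow R M (N i)"
    and irredundant: "\<forall>j<m. \<not> N j \<subseteq> gen_submodule R M (\<Union>i\<in>{..<m} - {j}. N i)"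
    using irredundant_generating_family by blast
  have incomparable: "\<not> In_sub R M (N i) \<subseteq> In_sub R M (N j)"
    if ij: "i < m" "j < m" "i \<noteq> j" for i j
  proof (rule In_sub_incomparable_if_irredundant[OF ij])
    show "N i \<subseteq> carrier M"
      using fixed ij(1) PS_hollow_subset_carrier unfolding In_fixed_PS_hollow_def by blast
    show "In_sub R M (N j) = N j"
      using fixed ij(2) unfolding In_fixed_PS_hollow_def by blast
    show "\<not> N i \<subseteq> gen_submodule R M (\<Union>k\<in>{..<m} - {i}. N k)"
      using irredundant ij(1) by blast
  qed
  have "minimal_PS_hollow_rep R M m N"
    unfolding minimal_PS_hollow_rep_def H_PS_hollow_def
    using gen fixed irredundant incomparable by (simp add: In_fixed_PS_hollow_def)
  then show ?thesis by blast
qed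

end
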